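(* If $A,B\in\mathcal{D}$ and $d(A)<d(B)$, then there exists $D\in\mathcal{D}$ such that $A\cap B\subseteq D\subseteq B$ and $d(D)=d(A)$.
   Context: $\mathbb{N}=\{1,2,3,\dots\}$. For $A\subseteq\mathbb{N}$ let $A(n)=|A\cap[1,n]|$. Let $\mathcal{D}$ be the collection of all $A\subseteq\mathbb{N}$ for which the asymptotic density $d(A)=\lim_{n\to\infty}\frac{A(n)}{n}$ exists. *)

theory Defs
  imports Complex_Main
begin

definition counting :: "nat set \<Rightarrow> nat \<Rightarrow> nat" where
  "counting A n = card (A \<inter> {1..n})"

definition has_density :: "nat set \<Rightarrow> real \<Rightarrow> bool" where
  "has_density A \<delta> \<longleftrightarrow> ((\<lambda>n. real (counting A n) / real n) \<longlongrightarrow> \<delta>) sequentially"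

definition density_sets :: "nat set set" where
  "density_sets = {A. A \<subseteq> {1..} \<and> (\<exists>\<delta>. has_density A \<delta>)}"

definition density :: "nat set \<Rightarrow> real" where
  "density A = lim (\<lambda>n. real (counting A n) / real n)"

end

theory Submission
  imports Defs
begin

text \<open>Build D greedily inside B: an element of B is taken if it lies in A, or if so far D has
  fallen below the target count a k. Then D(n) - a n is controlled from above by the last time
  D was below target (after which D grows at most like A), and from below by the last time D was
  above target (after which D grows like B, which is at least as dense).\<close>

lemma counting_0 [simp]: "counting X 0 = 0"
  by (simp add: counting_def)

lemma counting_Suc: "counting X (Suc n) = counting X n + (if Suc n \<in> X then 1 else 0)"
proof -
  have "X \<inter> {1..Suc n} = (if Suc n \<in> X then insert (Suc n) (X \<inter> {1..n}) else X \<inter> {1..n})"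
    by (auto simp: le_Suc_eq)
  then show ?thesis by (simp add: counting_def)
qed

lemma counting_le: "counting X n \<le> n"
  unfolding counting_def using card_mono[of "{1..n}" "X \<inter> {1..n}"] by simp

lemma density_eqI: "has_density X d \<Longrightarrow> density X = d"
  unfolding has_density_def density_def by (rule limI)

lemma has_density_counting_bound:
  fixes e :: real
  assumes "has_density X d" "e > 0"
  shows "\<exists>K\<ge>0. \<forall>n. \<bar>real (counting X n) - d * n\<bar> \<le> e * n + K"
proof -
  from assms have "\<forall>\<^sub>F n in sequentially. dist (real (counting X n) / n) d < e"
    unfolding has_density_def by (rule tendstoD)
  then obtain N where N: "\<And>n. n \<ge> N \<Longrightarrow> \<bar>real (counting X n) / n - d\<bar> < e"
    by (auto simp: dist_real_def eventually_sequentially)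
  define K where "K = (1 + \<bar>d\<bar>) * N"
  have "K \<ge> 0" unfolding K_def by simp
  moreover have "\<bar>real (counting X n) - d * n\<bar> \<le> e * n + K" for n
  proof (cases "n \<ge> N \<and> n > 0")
    case True
    have "real (counting X n) - d * n = n * (real (counting X n) / n - d)"
      using True by (simp add: field_simps)
    then have "\<bar>real (counting X n) - d * n\<bar> = n * \<bar>real (counting X n) / n - d\<bar>"
      by (simp add: abs_mult)
    also have "\<dots> \<le> n * e"
      using N True by (intro mult_left_mono) (auto intro: less_imp_le)
    finally show ?thesis using \<open>K \<ge> 0\<close> by (simp add: mult.commute)
  next
    case False
    then have "n \<le> N" by auto
    have "\<bar>real (counting X n) - d * n\<bar> \<le> real (counting X n) + \<bar>d\<bar> * n"
      by (simp add: abs_mult abs_triangle_ineq4[THEN order_trans])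
    also have "\<dots> \<le> (1 + \<bar>d\<bar>) * n"
      using counting_le[of X n] by (simp add: algebra_simps)
    also have "\<dots> \<le> K"
      unfolding K_def using \<open>n \<le> N\<close> by (intro mult_left_mono) auto
    finally show ?thesis
      using mult_nonneg_nonneg[of e "real n"] assms(2) by linarith
  qed
  ultimately show ?thesis by blast
qed

lemma has_densityI_counting_bound:
  fixes d :: real
  assumes bound: "\<And>e::real. e > 0 \<Longrightarrow> \<exists>K. \<forall>n. \<bar>real (counting X n) - d * n\<bar> \<le> e * n + K"
  shows "has_density X d"
  unfolding has_density_def
proof (rule LIMSEQ_I)
  fix r :: real assume "r > 0"
  then have "r / 2 > 0" by simp
  then obtain K where K: "\<And>n. \<bar>real (counting X n) - d * n\<bar> \<le> r / 2 * real n + K"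
    using bound by blast
  obtain N :: nat where "2 * \<bar>K\<bar> / r < N"
    using reals_Archimedean2 by blast
  show "\<exists>no. \<forall>n\<ge>no. norm (real (counting X n) / n - d) < r"
  proof (intro exI allI impI)
    fix n assume "n \<ge> Suc N"
    then have "n > 0" and "2 * \<bar>K\<bar> / r < n"
      using \<open>2 * \<bar>K\<bar> / r < N\<close> by auto
    then have "2 * \<bar>K\<bar> < r * n"
      using \<open>r > 0\<close> by (simp add: pos_divide_less_eq mult.commute)
    then have "\<bar>real (counting X n) - d * n\<bar> < r * n"
      using K[of n] by linarith
    moreover have "real (counting X n) / n - d = (real (counting X n) - d * n) / n"
      using \<open>n > 0\<close> by (simp add: field_simps)
    ultimately show "norm (real (counting X n) / n - d) < r"
      using \<open>n > 0\<close> by (simp add: abs_divide divide_less_eq)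
  qed
qed

fun greedy_count :: "nat set \<Rightarrow> nat set \<Rightarrow> real \<Rightarrow> nat \<Rightarrow> nat" where
  "greedy_count A B a 0 = 0"
| "greedy_count A B a (Suc n) = greedy_count A B a n +
     (if Suc n \<in> B \<and> (Suc n \<in> A \<or> real (greedy_count A B a n) < a * Suc n) then 1 else 0)"

definition greedy_subset :: "nat set \<Rightarrow> nat set \<Rightarrow> real \<Rightarrow> nat set" where
  "greedy_subset A B a = {k \<in> B. k \<in> A \<or> real (greedy_count A B a (k - 1)) < a * k}"

lemma greedy_subset_subset: "greedy_subset A B a \<subseteq> B"
  and Int_subset_greedy_subset: "A \<inter> B \<subseteq> greedy_subset A B a"
  by (auto simp: greedy_subset_def)

lemma counting_greedy_subset: "counting (greedy_subset A B a) n = greedy_count A B a n"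
  by (induction n) (simp_all add: counting_Suc greedy_subset_def)

lemma greedy_count_upper:
  "\<exists>m\<le>n. real (greedy_count A B a n) \<le> real (greedy_count A B a m) + real (counting A n) - real (counting A m)
     \<and> real (greedy_count A B a m) < a * m + 1"
proof (induction n)
  case (Suc n)
  then obtain m where m: "m \<le> n"
    "real (greedy_count A B a n) \<le> real (greedy_count A B a m) + real (counting A n) - real (counting A m)"
    "real (greedy_count A B a m) < a * m + 1" by blast
  show ?case
  proof (cases "Suc n \<in> B \<and> Suc n \<notin> A \<and> real (greedy_count A B a n) < a * Suc n")
    case True
    then show ?thesis by (intro exI[of _ "Suc n"]) simp
  next
    case False
    then show ?thesis using m by (intro exI[of _ m]) (auto simp: counting_Suc)
  qed
qed simp

lemma greedy_count_lower:
  "\<exists>m\<le>n. real (greedy_count A B a n) \<ge> real (greedy_count A B a m) + real (counting B n) - real (counting B m)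
     \<and> real (greedy_count A B a m) \<ge> a * m"
proof (induction n)
  case (Suc n)
  then obtain m where m: "m \<le> n"
    "real (greedy_count A B a n) \<ge> real (greedy_count A B a m) + real (counting B n) - real (counting B m)"
    "real (greedy_count A B a m) \<ge> a * m" by blast
  show ?case
  proof (cases "real (greedy_count A B a (Suc n)) \<ge> a * Suc n")
    case True
    then show ?thesis by (intro exI[of _ "Suc n"]) simp
  next
    case False
    then have "real (greedy_count A B a n) < a * Suc n" by simp
    then show ?thesis using m by (intro exI[of _ m]) (auto simp: counting_Suc)
  qed
qed simp

lemma has_density_greedy_subset:
  assumes A: "has_density A a" and B: "has_density B b" and "a \<le> b"
  shows "has_density (greedy_subset A B a) a"
proof (rule has_densityI_counting_bound)
  fix e :: real assume "e > 0"
  then have "e / 2 > 0" by simp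
  obtain KA where "KA \<ge> 0" and KA: "\<And>n. \<bar>real (counting A n) - a * n\<bar> \<le> e / 2 * real n + KA"
    using has_density_counting_bound[OF A \<open>e / 2 > 0\<close>] by blast
  obtain KB where "KB \<ge> 0" and KB: "\<And>n. \<bar>real (counting B n) - b * n\<bar> \<le> e / 2 * real n + KB"
    using has_density_counting_bound[OF B \<open>e / 2 > 0\<close>] by blast
  have "\<bar>real (greedy_count A B a n) - a * n\<bar> \<le> e * real n + (2 * KA + 2 * KB + 1)" for n
  proof -
    obtain m where "m \<le> n"
      and m: "real (greedy_count A B a n) \<le> real (greedy_count A B a m) + real (counting A n) - real (counting A m)"
        "real (greedy_count A B a m) < a * m + 1"
      using greedy_count_upper by blast
    have "e / 2 * m \<le> e / 2 * n" using \<open>m \<le> n\<close> \<open>e > 0\<close> by simp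
    then have upper: "real (greedy_count A B a n) \<le> a * n + e * n + 2 * KA + 1"
      using m KA[of n] KA[of m] by (simp add: abs_le_iff)
    obtain m' where "m' \<le> n"
      and m': "real (greedy_count A B a n) \<ge> real (greedy_count A B a m') + real (counting B n) - real (counting B m')"
        "real (greedy_count A B a m') \<ge> a * m'"
      using greedy_count_lower by blast
    have "e / 2 * m' \<le> e / 2 * n" using \<open>m' \<le> n\<close> \<open>e > 0\<close> by simp
    moreover have "a * (n - m') \<le> b * (n - m')"
      using \<open>a \<le> b\<close> \<open>m' \<le> n\<close> by (intro mult_right_mono) auto
    ultimately have lower: "real (greedy_count A B a n) \<ge> a * n - e * n - 2 * KB"
      using m' KB[of n] KB[of m'] \<open>m' \<le> n\<close> by (simp add: abs_le_iff algebra_simps)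
    show ?thesis using upper lower \<open>KA \<ge> 0\<close> \<open>KB \<ge> 0\<close> by (simp add: abs_le_iff)
  qed
  then show "\<exists>K. \<forall>n. \<bar>real (counting (greedy_subset A B a) n) - a * n\<bar> \<le> e * n + K"
    by (auto simp: counting_greedy_subset)
qed

theorem lemma3p4:
  assumes "A \<in> density_sets" and "B \<in> density_sets"
    and "density A < density B"
  shows "\<exists>D \<in> density_sets. A \<inter> B \<subseteq> D \<and> D \<subseteq> B \<and> density D = density A"
proof -
  from assms(1,2) obtain a b where A: "has_density A a" and B: "has_density B b"
    and "B \<subseteq> {1..}"
    by (auto simp: density_sets_def)
  have "a \<le> b" using assms(3) by (simp add: density_eqI[OF A] density_eqI[OF B])
  define D where "D = greedy_subset A B a"
  have D: "has_density D a"
    unfolding D_def using A B \<open>a \<le> b\<close> by (rule has_density_greedy_subset)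
  have "D \<subseteq> B" "A \<inter> B \<subseteq> D"
    unfolding D_def by (rule greedy_subset_subset Int_subset_greedy_subset)+
  with D \<open>B \<subseteq> {1..}\<close> have "D \<in> density_sets"
    by (auto simp: density_sets_def)
  with \<open>D \<subseteq> B\<close> \<open>A \<inter> B \<subseteq> D\<close> show ?thesis
    by (auto simp: density_eqI[OF D] density_eqI[OF A])
qed

end
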